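(* Consider the linear model $\mathbf{y}=\mathbf{X}\boldsymbol\beta+\boldsymbol\epsilon$, $\boldsymbol\epsilon\sim\mathrm{N}(\mathbf 0,\sigma^2\mathbf I_n)$, with $\mathbf X^\top\mathbf X=\mathbf I_p$, $\widehat{\boldsymbol\beta}^{\mathsf{LS}}=\mathbf X^\top\mathbf y$, and let $\alpha>0$. Let $\widehat{\boldsymbol\beta}=\arg\min_{\boldsymbol\beta}\tfrac12\|\mathbf y-\mathbf X\boldsymbol\beta\|_2^2+\gamma\sum_{j=1}^p w_j|\beta_j|$ with weights $w_j=\exp(-\alpha|\widehat\beta^{\mathsf{LS}}_j|)$ and $\gamma\in(\gamma_l,\gamma_{l+1})$ for consecutive transition points, and let $\mathcal A=\{j:\widehat\beta_j\neq0\}$. Then an unbiased estimate of the degrees of freedom of $\widehat{\mathbf y}_\gamma=\mathbf X\widehat{\boldsymbol\beta}$ is $$\widehat{df}_\gamma=|\mathcal A|+\gamma\sum_{j\in\mathcal A}\frac{\alpha}{\exp(\alpha|\widehat\beta^{\mathsf{LS}}_j|)}.$$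
   Context: Degrees of freedom of an estimator $\widehat{\mathbf y}$: $df(\widehat{\mathbf y})=\sigma^{-2}\sum_i\mathrm{Cov}(y_i,\widehat y_i)$ ($=\mathbb E[\mathrm{trace}(\partial\widehat{\mathbf y}/\partial\mathbf y)]$ by Stein's lemma); an unbiased estimate is a statistic with expectation $df(\widehat{\mathbf y})$. Transition points are the values $\gamma_1<\dots<\gamma_L$ of $\gamma>0$ at which the active set changes, for fixed data. *)

theory Defs
  imports "HOL-Probability.Probability"
begin

text \<open>Law of y = X beta + eps, eps ~ N(0, sd^2 I_n): independent normal coordinates
  with means mu = X beta and common standard deviation sd.\<close>
definition gauss_meas :: "real^'n \<Rightarrow> real \<Rightarrow> (real^'n) measure" where
  "gauss_meas mu sd =
     density lborel (\<lambda>x. ennreal (\<Prod>i\<in>UNIV. normal_density (mu $ i) sd (x $ i)))"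

definition covar :: "'a measure \<Rightarrow> ('a \<Rightarrow> real) \<Rightarrow> ('a \<Rightarrow> real) \<Rightarrow> real" where
  "covar M U V = (LINT x|M. (U x - (LINT z|M. U z)) * (V x - (LINT z|M. V z)))"

definition dof :: "(real^'n) measure \<Rightarrow> real \<Rightarrow> (real^'n \<Rightarrow> real^'n) \<Rightarrow> real" where
  "dof M sd yhat = (1 / sd^2) * (\<Sum>i\<in>UNIV. covar M (\<lambda>y. y $ i) (\<lambda>y. yhat y $ i))"

definition beta_LS :: "real^'p^'n \<Rightarrow> real^'n \<Rightarrow> real^'p" where
  "beta_LS X y = transpose X *v y"

definition alasso_obj :: "real^'p^'n \<Rightarrow> real \<Rightarrow> real \<Rightarrow> real^'n \<Rightarrow> real^'p \<Rightarrow> real" where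
  "alasso_obj X alpha gamma y b =
     (1/2) * (norm (y - X *v b))^2
     + gamma * (\<Sum>j\<in>UNIV. exp (- alpha * \<bar>beta_LS X y $ j\<bar>) * \<bar>b $ j\<bar>)"

definition active_set :: "real^'p \<Rightarrow> 'p set" where
  "active_set b = {j. b $ j \<noteq> 0}"

definition df_hat :: "real^'p^'n \<Rightarrow> real \<Rightarrow> real \<Rightarrow> (real^'n \<Rightarrow> real^'p) \<Rightarrow> real^'n \<Rightarrow> real" where
  "df_hat X alpha gamma betahat y =
     real (card (active_set (betahat y)))
     + gamma * (\<Sum>j\<in>active_set (betahat y). alpha / exp (alpha * \<bar>beta_LS X y $ j\<bar>))"

end

theory Submission
  imports Defs "HOL-Real_Asymp.Real_Asymp"
begin

text \<open>Since \<open>X\<^sup>T X = I\<close>, the objective separates in the coordinates of \<open>z = X\<^sup>T y\<close>, and each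
  coordinate of the minimiser is the adaptive soft threshold
  \<open>g(z\<^sub>j) = soft_threshold (\<gamma> exp (-\<alpha> |z\<^sub>j|)) z\<^sub>j\<close>. With \<open>t\<close> the fixpoint of
  \<open>t = \<gamma> exp (-\<alpha> t)\<close>, \<open>g\<close> vanishes on \<open>[-t, t]\<close> and equals \<open>z \<mp> \<gamma> exp (\<mp>\<alpha> z)\<close> outside,
  so it is continuous and smooth off \<open>\<plusminus>t\<close>, and the estimate is \<open>\<Sum>\<^sub>j g'(z\<^sub>j)\<close>.
  The columns of \<open>X\<close> are orthonormal, so \<open>z\<^sub>j \<sim> N(m\<^sub>j, \<sigma>\<^sup>2)\<close>, and bilinearity of the
  covariance turns \<open>\<Sum>\<^sub>i Cov(y\<^sub>i, (X betahat y)\<^sub>i)\<close> into \<open>\<Sum>\<^sub>j Cov(z\<^sub>j, g(z\<^sub>j))\<close>. Stein's identity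
  \<open>Cov(Z, g(Z)) = \<sigma>\<^sup>2 E g'(Z)\<close> follows by integrating \<open>(g \<phi>)'\<close> over the half-lines \<open>z > t\<close>
  and \<open>z < -t\<close>; no boundary terms appear because \<open>g(\<plusminus>t) = 0\<close>.\<close>

section \<open>Gaussian random vectors\<close>

lemma borel_measurable_vec_lambda_PiM[measurable]:
  "(\<lambda>f. (\<chi> i. f i) :: real^'n) \<in> borel_measurable (Pi\<^sub>M UNIV (\<lambda>_::'n. lborel))"
proof -
  have "(\<lambda>f. ((\<chi> i. f i) :: real^'n) \<bullet> axis k 1) \<in> borel_measurable (Pi\<^sub>M UNIV (\<lambda>_. lborel))" for k
    by (simp add: inner_axis measurable_component_singleton)
  then show ?thesis
    by (subst borel_measurable_euclidean_space) (auto simp: Basis_vec_def Basis_real_def)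
qed

lemma lborel_vec_eq_distr_PiM:
  "(lborel :: (real^'n) measure) = distr (Pi\<^sub>M UNIV (\<lambda>_::'n. lborel)) borel (\<lambda>f. \<chi> i. f i)"
proof (rule lborel_eqI)
  interpret product_sigma_finite "\<lambda>_::'n. lborel" by standard
  fix l u :: "real^'n"
  assume le_Basis: "\<And>b. b \<in> Basis \<Longrightarrow> l \<bullet> b \<le> u \<bullet> b"
  have le: "l $ i \<le> u $ i" for i
    using le_Basis[of "axis i 1"] by (simp add: inner_axis)
  have "(\<lambda>f. \<chi> i. f i) -` box l u \<inter> space (Pi\<^sub>M UNIV (\<lambda>_::'n. lborel)) = Pi\<^sub>E UNIV (\<lambda>i. {l$i<..<u$i})"
    by (auto simp: mem_box_cart space_PiM PiE_def extensional_def Pi_iff)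
  then have "emeasure (distr (Pi\<^sub>M UNIV (\<lambda>_. lborel)) borel (\<lambda>f. \<chi> i. f i)) (box l u)
      = (\<Prod>i\<in>UNIV. ennreal (u$i - l$i))"
    using le by (simp add: emeasure_distr emeasure_PiM)
  also have "\<dots> = ennreal (\<Prod>i\<in>UNIV. (u - l) \<bullet> axis i 1)"
    using le by (simp add: prod_ennreal inner_axis)
  also have "(\<Prod>i\<in>UNIV. (u - l) \<bullet> axis i 1) = (\<Prod>b\<in>Basis. (u - l) \<bullet> b)"
  proof -
    have Basis: "Basis = (\<lambda>i. axis i (1::real)) ` (UNIV :: 'n set)"
      by (auto simp: Basis_vec_def)
    have "inj (\<lambda>i. axis i (1::real) :: real^'n)"
      by (auto simp: inj_def axis_eq_axis)
    then show ?thesis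
      by (simp only: Basis prod.reindex o_def)
  qed
  finally show "emeasure (distr (Pi\<^sub>M UNIV (\<lambda>_. lborel)) borel (\<lambda>f. \<chi> i. f i)) (box l u)
      = (\<Prod>b\<in>Basis. (u - l) \<bullet> b)" .
qed (rule sets_distr)

definition normal_measure :: "real \<Rightarrow> real \<Rightarrow> real measure" where
  "normal_measure m sd = density lborel (normal_density m sd)"

lemma prob_space_normal_measure: "sd > 0 \<Longrightarrow> prob_space (normal_measure m sd)"
  unfolding normal_measure_def by (rule prob_space_normal_density)

lemma sets_normal_measure[simp, measurable_cong]: "sets (normal_measure m sd) = sets borel"
  by (simp add: normal_measure_def)

lemma space_normal_measure[simp]: "space (normal_measure m sd) = UNIV"
  by (simp add: normal_measure_def)

lemma density_PiM_lborel_eq_PiM_normal_measure: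
  fixes mu :: "real^'n"
  assumes sd: "sd > 0"
  shows "density (Pi\<^sub>M UNIV (\<lambda>_. lborel)) (\<lambda>f. \<Prod>i\<in>UNIV. normal_density (mu $ i) sd (f i))
    = Pi\<^sub>M UNIV (\<lambda>i. normal_measure (mu $ i) sd)"
proof -
  interpret N: product_sigma_finite "\<lambda>i. normal_measure (mu $ i) sd"
    by (auto simp: product_sigma_finite_def intro!: prob_space_imp_sigma_finite
        prob_space_normal_measure sd)
  interpret L: product_sigma_finite "\<lambda>_::'n. lborel" by standard
  show ?thesis
  proof (rule N.PiM_eqI)
    fix A assume "\<And>i. i \<in> UNIV \<Longrightarrow> A i \<in> sets (normal_measure (mu $ i) sd)"
    then have [measurable]: "A i \<in> sets borel" for i by simp
    have "Pi\<^sub>E UNIV A \<in> sets (Pi\<^sub>M UNIV (\<lambda>_::'n. lborel))"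
      by (rule sets_PiM_I_finite) auto
    moreover have "ennreal (\<Prod>i\<in>UNIV. normal_density (mu $ i) sd (f i)) * indicator (Pi\<^sub>E UNIV A) f
        = (\<Prod>i\<in>UNIV. ennreal (normal_density (mu $ i) sd (f i)) * indicator (A i) (f i))" for f
    proof -
      have "indicator (Pi\<^sub>E UNIV A) f = (\<Prod>i\<in>UNIV. indicator (A i) (f i) :: ennreal)"
        by (auto simp: indicator_def PiE_iff)
      then show ?thesis
        by (simp add: prod.distrib prod_ennreal)
    qed
    ultimately have "emeasure (density (Pi\<^sub>M UNIV (\<lambda>_. lborel))
          (\<lambda>f. \<Prod>i\<in>UNIV. normal_density (mu $ i) sd (f i))) (Pi\<^sub>E UNIV A)
        = (\<integral>\<^sup>+ f. (\<Prod>i\<in>UNIV. ennreal (normal_density (mu $ i) sd (f i)) * indicator (A i) (f i))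
            \<partial>Pi\<^sub>M UNIV (\<lambda>_. lborel))"
      by (simp add: emeasure_density)
    also have "\<dots> = (\<Prod>i\<in>UNIV. \<integral>\<^sup>+ x. ennreal (normal_density (mu $ i) sd x) * indicator (A i) x \<partial>lborel)"
      by (rule L.product_nn_integral_prod) auto
    also have "\<dots> = (\<Prod>i\<in>UNIV. emeasure (normal_measure (mu $ i) sd) (A i))"
      by (simp add: normal_measure_def emeasure_density)
    finally show "emeasure (density (Pi\<^sub>M UNIV (\<lambda>_. lborel))
          (\<lambda>f. \<Prod>i\<in>UNIV. normal_density (mu $ i) sd (f i))) (Pi\<^sub>E UNIV A)
        = (\<Prod>i\<in>UNIV. emeasure (normal_measure (mu $ i) sd) (A i))" .
  qed (auto intro!: sets_PiM_cong)
qed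

lemma gauss_meas_eq_distr_PiM:
  fixes mu :: "real^'n"
  assumes "sd > 0"
  shows "gauss_meas mu sd = distr (Pi\<^sub>M UNIV (\<lambda>i. normal_measure (mu $ i) sd)) borel (\<lambda>f. \<chi> i. f i)"
proof -
  have "gauss_meas mu sd = distr (density (Pi\<^sub>M UNIV (\<lambda>_. lborel))
      (\<lambda>f. \<Prod>i\<in>UNIV. normal_density (mu $ i) sd (f i))) borel (\<lambda>f. \<chi> i. f i)"
    unfolding gauss_meas_def lborel_vec_eq_distr_PiM by (subst density_distr) auto
  then show ?thesis
    by (simp add: density_PiM_lborel_eq_PiM_normal_measure assms)
qed

lemma sets_gauss_meas[simp, measurable_cong]: "sets (gauss_meas mu sd) = sets borel"
  by (simp add: gauss_meas_def)

lemma space_gauss_meas[simp]: "space (gauss_meas mu sd) = UNIV"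
  by (simp add: gauss_meas_def)

lemma prob_space_gauss_meas:
  fixes mu :: "real^'n"
  assumes sd: "sd > 0"
  shows "prob_space (gauss_meas mu sd)"
proof -
  interpret P: prob_space "Pi\<^sub>M UNIV (\<lambda>i. normal_measure (mu $ i) sd)"
    by (intro prob_space_PiM prob_space_normal_measure sd)
  show ?thesis
    unfolding gauss_meas_eq_distr_PiM[OF sd] by (rule P.prob_space_distr) simp
qed

lemma distr_gauss_meas_component:
  fixes mu :: "real^'n"
  assumes sd: "sd > 0"
  shows "distr (gauss_meas mu sd) borel (\<lambda>y. y $ i) = normal_measure (mu $ i) sd"
proof -
  have "distr (gauss_meas mu sd) borel (\<lambda>y. y $ i)
      = distr (Pi\<^sub>M UNIV (\<lambda>i. normal_measure (mu $ i) sd)) (normal_measure (mu $ i) sd) (\<lambda>f. f i)"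
    unfolding gauss_meas_eq_distr_PiM[OF sd]
    by (subst distr_distr) (auto simp: comp_def intro!: distr_cong)
  also have "\<dots> = normal_measure (mu $ i) sd"
    by (rule distr_PiM_component) (auto intro: prob_space_normal_measure sd)
  finally show ?thesis .
qed

lemma distributed_gauss_meas_component:
  fixes mu :: "real^'n"
  assumes "sd > 0"
  shows "distributed (gauss_meas mu sd) lborel (\<lambda>y. y $ i) (normal_density (mu $ i) sd)"
proof -
  have "distr (gauss_meas mu sd) lborel (\<lambda>y. y $ i) = distr (gauss_meas mu sd) borel (\<lambda>y. y $ i)"
    by (rule distr_cong) auto
  then show ?thesis
    using distr_gauss_meas_component[OF assms]
    by (simp add: distributed_def normal_measure_def)
qed

lemma indep_vars_gauss_meas_components:
  fixes mu :: "real^'n"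
  assumes sd: "sd > 0"
  shows "prob_space.indep_vars (gauss_meas mu sd) (\<lambda>_. borel) (\<lambda>i y. y $ i) UNIV"
proof -
  interpret prob_space "gauss_meas mu sd" by (rule prob_space_gauss_meas[OF sd])
  have [measurable]: "(\<lambda>y::real^'n. \<lambda>i. y $ i) \<in> borel \<rightarrow>\<^sub>M Pi\<^sub>M UNIV (\<lambda>_. borel)"
    by (rule measurable_PiM_single') auto
  have "distr (gauss_meas mu sd) (Pi\<^sub>M UNIV (\<lambda>_. borel)) (\<lambda>y. \<lambda>i\<in>UNIV. y $ i)
      = distr (Pi\<^sub>M UNIV (\<lambda>i. normal_measure (mu $ i) sd)) (Pi\<^sub>M UNIV (\<lambda>_. borel)) (\<lambda>f. f)"
    unfolding gauss_meas_eq_distr_PiM[OF sd]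
    by (subst distr_distr) (auto simp: comp_def restrict_UNIV vec_lambda_inverse)
  also have "\<dots> = Pi\<^sub>M UNIV (\<lambda>i. normal_measure (mu $ i) sd)"
    by (intro distr_id2 sets_PiM_cong) auto
  also have "\<dots> = Pi\<^sub>M UNIV (\<lambda>i. distr (gauss_meas mu sd) borel (\<lambda>y. y $ i))"
    by (simp add: distr_gauss_meas_component sd)
  finally show ?thesis
    by (subst indep_vars_iff_distr_eq_PiM) auto
qed

lemma distributed_gauss_meas_unit_combination:
  fixes mu :: "real^'n" and v :: "'n \<Rightarrow> real"
  assumes sd: "sd > 0" and v: "(\<Sum>i\<in>UNIV. (v i)\<^sup>2) = 1"
  shows "distributed (gauss_meas mu sd) lborel (\<lambda>y. \<Sum>i\<in>UNIV. v i * y $ i)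
    (normal_density (\<Sum>i\<in>UNIV. v i * mu $ i) sd)"
proof -
  interpret prob_space "gauss_meas mu sd" by (rule prob_space_gauss_meas[OF sd])
  define I where "I = {i. v i \<noteq> 0}"
  have sum_I: "(\<Sum>i\<in>UNIV. v i * f i) = (\<Sum>i\<in>I. v i * f i)" for f
    by (rule sum.mono_neutral_right) (auto simp: I_def)
  have "I \<noteq> {}"
  proof
    assume "I = {}"
    then show False using v by (simp add: I_def)
  qed
  moreover have "indep_vars (\<lambda>_. borel) (\<lambda>i y. v i * y $ i) I"
    using indep_vars_compose2[OF indep_vars_subset[OF indep_vars_gauss_meas_components[OF sd]],
        of I "\<lambda>i x. v i * x" "\<lambda>_. borel"]
    by auto
  moreover have "distributed (gauss_meas mu sd) lborel (\<lambda>y. v i * y $ i)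
      (normal_density (v i * mu $ i) (\<bar>v i\<bar> * sd))" if "i \<in> I" for i
    using normal_density_affine[OF distributed_gauss_meas_component[OF sd], of "v i" 0] that sd
    by (simp add: I_def)
  ultimately have "distributed (gauss_meas mu sd) lborel (\<lambda>y. \<Sum>i\<in>I. v i * y $ i)
      (normal_density (\<Sum>i\<in>I. v i * mu $ i) (sqrt (\<Sum>i\<in>I. (\<bar>v i\<bar> * sd)\<^sup>2)))"
    using sd by (intro sum_indep_normal) (auto simp: I_def)
  moreover have "(\<Sum>i\<in>I. (\<bar>v i\<bar> * sd)\<^sup>2) = sd\<^sup>2 * (\<Sum>i\<in>I. (v i)\<^sup>2)"
    by (simp add: power_mult_distrib sum_distrib_left mult.commute)
  moreover have "(\<Sum>i\<in>I. (v i)\<^sup>2) = 1"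
    using v sum_I[of v] by (simp add: power2_eq_square)
  ultimately show ?thesis
    using sd by (simp add: sum_I)
qed

section \<open>Covariance\<close>

lemma integrable_mult_of_square_integrable:
  fixes f g :: "'a \<Rightarrow> real"
  assumes [measurable]: "f \<in> borel_measurable M" "g \<in> borel_measurable M"
    and "integrable M (\<lambda>x. (f x)\<^sup>2)" "integrable M (\<lambda>x. (g x)\<^sup>2)"
  shows "integrable M (\<lambda>x. f x * g x)"
proof (rule Bochner_Integration.integrable_bound)
  show "integrable M (\<lambda>x. (f x)\<^sup>2 + (g x)\<^sup>2)"
    using assms by auto
  have "\<bar>a * b\<bar> \<le> a\<^sup>2 + b\<^sup>2" for a b :: real
  proof -
    have "0 \<le> (\<bar>a\<bar> - \<bar>b\<bar>)\<^sup>2" by simp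
    then have "2 * (\<bar>a\<bar> * \<bar>b\<bar>) \<le> a\<^sup>2 + b\<^sup>2"
      by (simp add: power2_eq_square algebra_simps)
    moreover have "0 \<le> \<bar>a\<bar> * \<bar>b\<bar>" by simp
    ultimately show ?thesis
      unfolding abs_mult by linarith
  qed
  then show "AE x in M. norm (f x * g x) \<le> norm ((f x)\<^sup>2 + (g x)\<^sup>2)"
    by simp
qed simp

lemma covar_commute: "covar M U V = covar M V U"
  by (simp add: covar_def mult.commute)

lemma (in prob_space) covar_eq_expectation:
  assumes "integrable M U" "integrable M V" "integrable M (\<lambda>x. U x * V x)"
  shows "covar M U V = expectation (\<lambda>x. U x * V x) - expectation U * expectation V"
proof -
  have "(U x - expectation U) * (V x - expectation V)
      = U x * V x - expectation V * U x - expectation U * V x + expectation U * expectation V" for x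
    by (simp add: algebra_simps)
  then show ?thesis
    using assms by (simp add: covar_def prob_space)
qed

lemma (in prob_space) covar_sum_right:
  assumes "finite J" "integrable M U" "\<And>j. j \<in> J \<Longrightarrow> integrable M (V j)"
    and "\<And>j. j \<in> J \<Longrightarrow> integrable M (\<lambda>x. U x * V j x)"
  shows "covar M U (\<lambda>x. \<Sum>j\<in>J. a j * V j x) = (\<Sum>j\<in>J. a j * covar M U (V j))"
proof -
  have U_sum: "U x * (\<Sum>j\<in>J. a j * V j x) = (\<Sum>j\<in>J. a j * (U x * V j x))" for x
    by (simp add: sum_distrib_left mult.left_commute)
  have "covar M U (\<lambda>x. \<Sum>j\<in>J. a j * V j x)
      = expectation (\<lambda>x. \<Sum>j\<in>J. a j * (U x * V j x))
        - expectation U * expectation (\<lambda>x. \<Sum>j\<in>J. a j * V j x)"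
    unfolding U_sum[symmetric] using assms
    by (intro covar_eq_expectation)
      (auto simp only: U_sum intro!: Bochner_Integration.integrable_sum integrable_mult_right)
  also have "\<dots> = (\<Sum>j\<in>J. a j * expectation (\<lambda>x. U x * V j x))
      - expectation U * (\<Sum>j\<in>J. a j * expectation (V j))"
    using assms by (simp add: Bochner_Integration.integral_sum)
  also have "\<dots> = (\<Sum>j\<in>J. a j * (expectation (\<lambda>x. U x * V j x) - expectation U * expectation (V j)))"
    by (simp add: sum_subtractf sum_distrib_left right_diff_distrib mult.left_commute)
  also have "\<dots> = (\<Sum>j\<in>J. a j * covar M U (V j))"
    using assms by (simp add: covar_eq_expectation)
  finally show ?thesis .
qed

lemma (in prob_space) sum_covar_matrix_vector_mult:
  fixes X :: "real^'p^'n" and U :: "'a \<Rightarrow> real^'n" and V :: "'a \<Rightarrow> real^'p"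
  assumes U_meas: "\<And>i. (\<lambda>x. U x $ i) \<in> borel_measurable M"
    and U_sq: "\<And>i. integrable M (\<lambda>x. (U x $ i)\<^sup>2)"
    and V_meas: "\<And>j. (\<lambda>x. V x $ j) \<in> borel_measurable M"
    and V_sq: "\<And>j. integrable M (\<lambda>x. (V x $ j)\<^sup>2)"
  shows "(\<Sum>i\<in>UNIV. covar M (\<lambda>x. U x $ i) (\<lambda>x. (X *v V x) $ i))
    = (\<Sum>j\<in>UNIV. covar M (\<lambda>x. (transpose X *v U x) $ j) (\<lambda>x. V x $ j))"
proof -
  have U_int: "integrable M (\<lambda>x. U x $ i)" for i
    by (rule square_integrable_imp_integrable[OF U_meas U_sq])
  have V_int: "integrable M (\<lambda>x. V x $ j)" for j
    by (rule square_integrable_imp_integrable[OF V_meas V_sq])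
  have UV_int: "integrable M (\<lambda>x. U x $ i * V x $ j)" for i j
    by (rule integrable_mult_of_square_integrable[OF U_meas V_meas U_sq V_sq])
  have VU_int: "integrable M (\<lambda>x. V x $ j * U x $ i)" for i j
    using UV_int by (simp add: mult.commute)
  have "(\<Sum>i\<in>UNIV. covar M (\<lambda>x. U x $ i) (\<lambda>x. (X *v V x) $ i))
      = (\<Sum>i\<in>UNIV. \<Sum>j\<in>UNIV. X $ i $ j * covar M (\<lambda>x. U x $ i) (\<lambda>x. V x $ j))"
    unfolding matrix_vector_mult_def by (simp add: covar_sum_right U_int V_int UV_int)
  also have "\<dots> = (\<Sum>j\<in>UNIV. \<Sum>i\<in>UNIV. X $ i $ j * covar M (\<lambda>x. V x $ j) (\<lambda>x. U x $ i))"
    by (subst sum.swap) (simp add: covar_commute)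
  also have "\<dots> = (\<Sum>j\<in>UNIV. covar M (\<lambda>x. V x $ j) (\<lambda>x. \<Sum>i\<in>UNIV. X $ i $ j * U x $ i))"
    by (simp add: covar_sum_right U_int V_int VU_int)
  also have "\<dots> = (\<Sum>j\<in>UNIV. covar M (\<lambda>x. (transpose X *v U x) $ j) (\<lambda>x. V x $ j))"
    by (simp add: covar_commute matrix_vector_mult_def transpose_def)
  finally show ?thesis .
qed

section \<open>Stein's identity\<close>

lemma (in prob_space) integrable_square_normal_distributed:
  assumes sd: "sd > 0" and Z: "distributed M lborel Z (normal_density m sd)"
  shows "integrable M (\<lambda>x. (Z x)\<^sup>2)"
proof -
  have "normal_density m sd z * z\<^sup>2 = normal_density m sd z * (z - m)\<^sup>2
      + 2 * m * (normal_density m sd z * (z - m)^1) + m\<^sup>2 * normal_density m sd z" for z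
    by (simp add: power2_eq_square algebra_simps)
  then have "integrable lborel (\<lambda>z. normal_density m sd z * z\<^sup>2)"
    using integrable_normal_moment[OF sd, of m 2] integrable_normal_moment[OF sd, of m 1]
      integrable_normal_density[OF sd, of m]
    by (simp del: power_one_right)
  then show ?thesis
    by (subst distributed_integrable[OF Z, symmetric]) auto
qed

lemma (in prob_space) integrable_square_comp_normal_distributed:
  assumes sd: "sd > 0" and Z: "distributed M lborel Z (normal_density m sd)"
    and [measurable]: "g \<in> borel_measurable borel" and g_le: "\<And>z. \<bar>g z\<bar> \<le> \<bar>z\<bar>"
  shows "integrable M (\<lambda>x. (g (Z x))\<^sup>2)"
proof (rule Bochner_Integration.integrable_bound)
  have [measurable]: "Z \<in> borel_measurable M"
    using Z by (simp add: distributed_def)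
  then show "(\<lambda>x. (g (Z x))\<^sup>2) \<in> borel_measurable M"
    by measurable
  show "integrable M (\<lambda>x. (Z x)\<^sup>2)"
    by (rule integrable_square_normal_distributed[OF sd Z])
  show "AE x in M. norm ((g (Z x))\<^sup>2) \<le> norm ((Z x)\<^sup>2)"
    using g_le by (simp add: abs_le_square_iff)
qed

lemma (in prob_space) covar_normal_distributed:
  assumes sd: "sd > 0" and Z: "distributed M lborel Z (normal_density m sd)"
    and [measurable]: "g \<in> borel_measurable borel"
    and g_sq: "integrable M (\<lambda>x. (g (Z x))\<^sup>2)"
  shows "covar M Z (\<lambda>x. g (Z x)) = (\<integral>z. normal_density m sd z * ((z - m) * g z) \<partial>lborel)"
proof -
  have [measurable]: "Z \<in> borel_measurable M"
    using Z by (simp add: distributed_def)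
  have Z_sq: "integrable M (\<lambda>x. (Z x)\<^sup>2)"
    by (rule integrable_square_normal_distributed[OF sd Z])
  have Z_int: "integrable M Z" and gZ_int: "integrable M (\<lambda>x. g (Z x))"
    using Z_sq g_sq by (auto intro: square_integrable_imp_integrable)
  have ZgZ_int: "integrable M (\<lambda>x. Z x * g (Z x))"
    by (rule integrable_mult_of_square_integrable[OF _ _ Z_sq g_sq]) auto
  have "covar M Z (\<lambda>x. g (Z x)) = expectation (\<lambda>x. Z x * g (Z x)) - m * expectation (\<lambda>x. g (Z x))"
    using Z_int gZ_int ZgZ_int normal_distributed_expectation[OF sd Z]
    by (simp add: covar_eq_expectation)
  also have "\<dots> = expectation (\<lambda>x. (Z x - m) * g (Z x))"
    using gZ_int ZgZ_int by (simp add: left_diff_distrib)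
  also have "\<dots> = (\<integral>z. normal_density m sd z * ((z - m) * g z) \<partial>lborel)"
    by (rule distributed_integral[OF Z, symmetric]) auto
  finally show ?thesis .
qed

lemma normal_density_has_real_derivative:
  assumes sd: "sd > 0"
  shows "(normal_density m sd has_real_derivative - normal_density m sd x * (x - m) / sd\<^sup>2) (at x)"
proof -
  define c where "c = 1 / sqrt (2 * pi * sd\<^sup>2)"
  have "normal_density m sd = (\<lambda>x. c * exp (- (x - m)\<^sup>2 / (2 * sd\<^sup>2)))"
    by (auto simp: c_def normal_density_def)
  moreover have "((\<lambda>x. c * exp (- (x - m)\<^sup>2 / (2 * sd\<^sup>2))) has_real_derivative
      - (c * exp (- (x - m)\<^sup>2 / (2 * sd\<^sup>2))) * (x - m) / sd\<^sup>2) (at x)"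
    using sd by (auto intro!: derivative_eq_intros simp: power2_eq_square field_simps)
  ultimately show ?thesis
    by simp
qed

lemma isCont_normal_density: "sd > 0 \<Longrightarrow> isCont (normal_density m sd) x"
  by (rule DERIV_isCont[OF normal_density_has_real_derivative])

lemma stein_identity_interval:
  fixes G G' :: "real \<Rightarrow> real" and a b :: ereal
  assumes sd: "sd > 0" and ab: "a < b"
    and G: "\<And>x. a < ereal x \<Longrightarrow> ereal x < b \<Longrightarrow> (G has_real_derivative G' x) (at x)"
    and G'_cont: "\<And>x. a < ereal x \<Longrightarrow> ereal x < b \<Longrightarrow> isCont G' x"
    and G_int: "set_integrable lborel (einterval a b) (\<lambda>z. normal_density m sd z * ((z - m) * G z))"
    and G'_int: "set_integrable lborel (einterval a b) (\<lambda>z. normal_density m sd z * G' z)"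
    and lim_a: "(((\<lambda>z. G z * normal_density m sd z) \<circ> real_of_ereal) \<longlongrightarrow> 0) (at_right a)"
    and lim_b: "(((\<lambda>z. G z * normal_density m sd z) \<circ> real_of_ereal) \<longlongrightarrow> 0) (at_left b)"
  shows "(LINT z:einterval a b|lborel. normal_density m sd z * ((z - m) * G z))
    = sd\<^sup>2 * (LINT z:einterval a b|lborel. normal_density m sd z * G' z)"
proof -
  define h where "h z = normal_density m sd z * G' z - normal_density m sd z * ((z - m) * G z) / sd\<^sup>2" for z
  have h_int: "set_integrable lborel (einterval a b) h"
    unfolding h_def using G_int G'_int by auto
  have "(LBINT z=a..b. h z) = 0 - 0"
  proof (rule interval_integral_FTC_integrable[OF ab])
    fix x assume x: "a < ereal x" "ereal x < b"
    have "((\<lambda>z. G z * normal_density m sd z) has_real_derivative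
        G' x * normal_density m sd x + (- normal_density m sd x * (x - m) / sd\<^sup>2) * G x) (at x)"
      by (rule DERIV_mult[OF G[OF x] normal_density_has_real_derivative[OF sd]])
    then show "((\<lambda>z. G z * normal_density m sd z) has_vector_derivative h x) (at x)"
      using sd by (simp add: has_real_derivative_iff_has_vector_derivative h_def field_simps)
    show "isCont h x"
      unfolding h_def[abs_def] using DERIV_isCont[OF G[OF x]] G'_cont[OF x] isCont_normal_density sd
      by (intro continuous_intros) auto
  qed (use h_int lim_a lim_b in auto)
  moreover have "(LBINT z=a..b. h z) = (LINT z:einterval a b|lborel. h z)"
    using ab by (simp add: interval_lebesgue_integral_def less_imp_le)
  ultimately have "(LINT z:einterval a b|lborel. normal_density m sd z * G' z)
      - (LINT z:einterval a b|lborel. normal_density m sd z * ((z - m) * G z)) / sd\<^sup>2 = 0"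
    unfolding h_def using G_int G'_int by simp
  then show ?thesis
    using sd by (simp add: field_simps)
qed

section \<open>Soft thresholding under an orthonormal design\<close>

definition soft_threshold :: "real \<Rightarrow> real \<Rightarrow> real" where
  "soft_threshold c z = (if \<bar>z\<bar> \<le> c then 0 else if z > 0 then z - c else z + c)"

lemma soft_threshold_quadratic_growth:
  fixes c z x :: real
  assumes c: "c \<ge> 0"
  defines "s \<equiv> soft_threshold c z"
  shows "(x - s)\<^sup>2 / 2 \<le> (x\<^sup>2 / 2 - z * x + c * \<bar>x\<bar>) - (s\<^sup>2 / 2 - z * s + c * \<bar>s\<bar>)"
proof -
  have "z * x \<le> c * \<bar>x\<bar>" if "\<bar>z\<bar> \<le> c"
    using that abs_ge_self[of "z * x"] mult_right_mono[OF that abs_ge_zero[of x]]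
    by (simp add: abs_mult)
  moreover have "0 \<le> c * x" if "0 \<le> x" using c that by simp
  moreover have "c * x \<le> 0" if "x \<le> 0" using c that by (simp add: mult_nonneg_nonpos)
  ultimately show ?thesis
    unfolding s_def soft_threshold_def by (auto simp: abs_if power2_eq_square field_simps)
qed

definition adaptive_soft :: "real \<Rightarrow> real \<Rightarrow> real \<Rightarrow> real" where
  "adaptive_soft a gam z = soft_threshold (gam * exp (- a * \<bar>z\<bar>)) z"

lemma alasso_obj_orthonormal:
  fixes X :: "real^'p^'n"
  assumes XX: "transpose X ** X = mat 1"
  shows "alasso_obj X alpha gamma y b = (y \<bullet> y) / 2 + (\<Sum>j\<in>UNIV. (b $ j)\<^sup>2 / 2
    - beta_LS X y $ j * b $ j + gamma * exp (- alpha * \<bar>beta_LS X y $ j\<bar>) * \<bar>b $ j\<bar>)"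
proof -
  have "(X *v b) \<bullet> (X *v b) = (transpose X *v (X *v b)) \<bullet> b"
    by (simp add: dot_lmul_matrix[symmetric])
  also have "\<dots> = b \<bullet> b"
    by (simp add: matrix_vector_mul_assoc XX)
  finally have "(norm (y - X *v b))\<^sup>2 = y \<bullet> y - 2 * (beta_LS X y \<bullet> b) + b \<bullet> b"
    by (simp add: power2_norm_eq_inner inner_diff_left inner_diff_right inner_commute beta_LS_def
        dot_lmul_matrix[symmetric])
  moreover have "(\<Sum>j\<in>UNIV. (b $ j)\<^sup>2 / 2 - beta_LS X y $ j * b $ j
      + gamma * exp (- alpha * \<bar>beta_LS X y $ j\<bar>) * \<bar>b $ j\<bar>)
    = (b \<bullet> b) / 2 - beta_LS X y \<bullet> b
      + gamma * (\<Sum>j\<in>UNIV. exp (- alpha * \<bar>beta_LS X y $ j\<bar>) * \<bar>b $ j\<bar>)"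
    by (simp add: inner_vec_def power2_eq_square sum.distrib sum_subtractf sum_divide_distrib
        sum_distrib_left mult.assoc)
  ultimately show ?thesis
    by (simp add: alasso_obj_def)
qed

lemma alasso_minimiser_eq_adaptive_soft:
  fixes X :: "real^'p^'n"
  assumes XX: "transpose X ** X = mat 1" and gamma: "gamma \<ge> 0"
    and min: "\<And>b'. alasso_obj X alpha gamma y b \<le> alasso_obj X alpha gamma y b'"
  shows "b $ j = adaptive_soft alpha gamma (beta_LS X y $ j)"
proof -
  define z where "z = beta_LS X y"
  define c where "c k = gamma * exp (- alpha * \<bar>z $ k\<bar>)" for k
  define psi where "psi k x = x\<^sup>2 / 2 - z $ k * x + c k * \<bar>x\<bar>" for k x
  define s where "s = soft_threshold (c j) (z $ j)"
  define b' where "b' = (\<chi> k. if k = j then s else b $ k)"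
  have obj: "alasso_obj X alpha gamma y v = (y \<bullet> y) / 2 + psi j (v $ j) + (\<Sum>k\<in>UNIV - {j}. psi k (v $ k))"
    for v
  proof -
    have "alasso_obj X alpha gamma y v = (y \<bullet> y) / 2 + (\<Sum>k\<in>UNIV. psi k (v $ k))"
      by (simp add: alasso_obj_orthonormal[OF XX] psi_def c_def z_def mult.assoc)
    then show ?thesis
      by (simp add: sum.remove[of UNIV j])
  qed
  have "(\<Sum>k\<in>UNIV - {j}. psi k (b' $ k)) = (\<Sum>k\<in>UNIV - {j}. psi k (b $ k))"
    by (rule sum.cong) (auto simp: b'_def)
  then have "psi j (b $ j) \<le> psi j s"
    using min[of b'] unfolding obj by (simp add: b'_def)
  moreover have "(b $ j - s)\<^sup>2 / 2 \<le> psi j (b $ j) - psi j s"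
    unfolding psi_def s_def using gamma by (intro soft_threshold_quadratic_growth) (simp add: c_def)
  ultimately have "(b $ j - s)\<^sup>2 \<le> 0"
    by linarith
  then show ?thesis
    by (simp add: s_def adaptive_soft_def c_def z_def)
qed

text \<open>The derivative of \<^const>\<open>adaptive_soft\<close> away from its two kinks, where the value is
  immaterial since they form a null set.\<close>
definition adaptive_soft_deriv :: "real \<Rightarrow> real \<Rightarrow> real \<Rightarrow> real" where
  "adaptive_soft_deriv a gam z =
    (if adaptive_soft a gam z \<noteq> 0 then 1 + gam * (a / exp (a * \<bar>z\<bar>)) else 0)"

lemma borel_measurable_adaptive_soft[measurable]: "adaptive_soft a gam \<in> borel_measurable borel"
  unfolding adaptive_soft_def[abs_def] soft_threshold_def by measurable

lemma borel_measurable_adaptive_soft_deriv[measurable]: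
  "adaptive_soft_deriv a gam \<in> borel_measurable borel"
  unfolding adaptive_soft_deriv_def[abs_def] by measurable

lemma abs_adaptive_soft_le: "gam \<ge> 0 \<Longrightarrow> \<bar>adaptive_soft a gam z\<bar> \<le> \<bar>z\<bar>"
  by (auto simp: adaptive_soft_def soft_threshold_def)

lemma abs_adaptive_soft_deriv_le:
  assumes "a \<ge> 0" "gam \<ge> 0"
  shows "\<bar>adaptive_soft_deriv a gam z\<bar> \<le> 1 + gam * a"
proof -
  have "a / exp (a * \<bar>z\<bar>) \<le> a"
    using assms by (simp add: divide_le_eq mult_le_cancel_left1)
  then show ?thesis
    using assms mult_left_mono[of "a / exp (a * \<bar>z\<bar>)" a gam]
    by (simp add: adaptive_soft_deriv_def)
qed

lemma adaptive_soft_fixpoint_exists: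
  fixes a gam :: real
  assumes "a \<ge> 0" "gam \<ge> 0"
  obtains t where "t = gam * exp (- a * t)"
proof -
  have "\<exists>t\<ge>0. t \<le> gam \<and> t - gam * exp (- a * t) = 0"
  proof (rule IVT[of "\<lambda>s. s - gam * exp (- a * s)"])
    have "gam * exp (- a * gam) \<le> gam"
      using assms by (simp add: mult_left_le)
    then show "0 \<le> gam - gam * exp (- a * gam)"
      by simp
  qed (use assms in \<open>auto intro!: continuous_intros\<close>)
  then show ?thesis
    using that by auto
qed

lemma le_adaptive_soft_fixpoint_iff:
  fixes a gam t s :: real
  assumes a: "a \<ge> 0" and gam: "gam \<ge> 0" and t: "t = gam * exp (- a * t)"
  shows "s \<le> gam * exp (- a * s) \<longleftrightarrow> s \<le> t"
proof -
  define h where "h s = s - gam * exp (- a * s)" for s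
  have "strict_mono h"
  proof (rule strict_monoI)
    fix s s' :: real assume "s < s'"
    then have "gam * exp (- a * s') \<le> gam * exp (- a * s)"
      using a gam by (intro mult_left_mono) (auto intro: mult_left_mono)
    with \<open>s < s'\<close> show "h s < h s'"
      by (simp add: h_def)
  qed
  moreover have "h t = 0"
    using t by (simp add: h_def)
  ultimately show ?thesis
    by (metis h_def diff_le_0_iff_le strict_mono_less_eq)
qed

lemma adaptive_soft_eq:
  assumes a: "a \<ge> 0" and gam: "gam \<ge> 0" and t: "t = gam * exp (- a * t)"
  shows "adaptive_soft a gam z =
    (if t < z then z - gam * exp (- a * z) else if z < - t then z + gam * exp (a * z) else 0)"
proof -
  have "t \<ge> 0"
    using gam by (subst t) simp
  then show ?thesis
    using le_adaptive_soft_fixpoint_iff[OF a gam t, of "\<bar>z\<bar>"]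
    by (auto simp: adaptive_soft_def soft_threshold_def)
qed

lemma adaptive_soft_deriv_eq:
  assumes a: "a \<ge> 0" and gam: "gam \<ge> 0" and t: "t = gam * exp (- a * t)"
  shows "adaptive_soft_deriv a gam z = (if t < \<bar>z\<bar> then 1 + gam * (a / exp (a * \<bar>z\<bar>)) else 0)"
proof -
  have "adaptive_soft a gam z = 0 \<longleftrightarrow> \<bar>z\<bar> \<le> t"
    using le_adaptive_soft_fixpoint_iff[OF a gam t, of "\<bar>z\<bar>"] gam
    by (auto simp: adaptive_soft_def soft_threshold_def)
  then show ?thesis
    by (auto simp: adaptive_soft_deriv_def)
qed

lemma integrable_normal_density_mult_centred:
  fixes g :: "real \<Rightarrow> real"
  assumes sd: "sd > 0" and [measurable]: "g \<in> borel_measurable borel" and g: "\<And>z. \<bar>g z\<bar> \<le> \<bar>z\<bar>"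
  shows "integrable lborel (\<lambda>z. normal_density m sd z * ((z - m) * g z))"
proof (rule Bochner_Integration.integrable_bound)
  have "normal_density m sd z * (\<bar>z - m\<bar>^2 + \<bar>m\<bar> * \<bar>z - m\<bar>)
      = normal_density m sd z * \<bar>z - m\<bar>^2 + \<bar>m\<bar> * (normal_density m sd z * \<bar>z - m\<bar>^1)" for z
    by (simp add: algebra_simps)
  then show "integrable lborel (\<lambda>z. normal_density m sd z * (\<bar>z - m\<bar>^2 + \<bar>m\<bar> * \<bar>z - m\<bar>))"
    using integrable_normal_moment_abs[OF sd, of m 2] integrable_normal_moment_abs[OF sd, of m 1]
    by (simp del: power_one_right)
  have "\<bar>(z - m) * g z\<bar> \<le> \<bar>z - m\<bar>^2 + \<bar>m\<bar> * \<bar>z - m\<bar>" for z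
  proof -
    have "\<bar>g z\<bar> \<le> \<bar>z - m\<bar> + \<bar>m\<bar>"
      using g[of z] by linarith
    then have "\<bar>z - m\<bar> * \<bar>g z\<bar> \<le> \<bar>z - m\<bar> * (\<bar>z - m\<bar> + \<bar>m\<bar>)"
      by (rule mult_left_mono) simp
    then show ?thesis
      by (simp add: abs_mult power2_eq_square distrib_left mult.commute)
  qed
  then show "AE z in lborel. norm (normal_density m sd z * ((z - m) * g z))
      \<le> norm (normal_density m sd z * (\<bar>z - m\<bar>^2 + \<bar>m\<bar> * \<bar>z - m\<bar>))"
    by (intro AE_I2) (simp add: abs_mult mult_left_mono del: power2_abs)
qed simp

lemma integrable_normal_density_mult_adaptive_soft:
  "sd > 0 \<Longrightarrow> gam \<ge> 0 \<Longrightarrow>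
    integrable lborel (\<lambda>z. normal_density m sd z * ((z - m) * adaptive_soft a gam z))"
  by (rule integrable_normal_density_mult_centred) (auto intro: abs_adaptive_soft_le)

lemma integrable_normal_density_mult_adaptive_soft_deriv:
  assumes "sd > 0" "a \<ge> 0" "gam \<ge> 0"
  shows "integrable lborel (\<lambda>z. normal_density m sd z * adaptive_soft_deriv a gam z)"
proof (rule Bochner_Integration.integrable_bound)
  show "integrable lborel (\<lambda>z. (1 + gam * a) * normal_density m sd z)"
    using assms by auto
  show "AE z in lborel. norm (normal_density m sd z * adaptive_soft_deriv a gam z)
      \<le> norm ((1 + gam * a) * normal_density m sd z)"
    using assms abs_adaptive_soft_deriv_le[OF assms(2,3)]
    by (auto simp: abs_mult mult.commute intro!: mult_left_mono)
qed simp

lemma set_integrable_normal_density_mult_adaptive_soft: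
  assumes "sd > 0" "a \<ge> 0" "gam \<ge> 0" "A \<in> sets borel"
  shows "set_integrable lborel A (\<lambda>z. normal_density m sd z * ((z - m) * adaptive_soft a gam z))"
    and "set_integrable lborel A (\<lambda>z. normal_density m sd z * adaptive_soft_deriv a gam z)"
  using assms integrable_mult_indicator[OF _ integrable_normal_density_mult_adaptive_soft]
    integrable_mult_indicator[OF _ integrable_normal_density_mult_adaptive_soft_deriv]
  by (simp_all add: set_integrable_def)

lemma tendsto_mult_normal_density_at_top:
  fixes a gam :: real
  assumes "sd > 0" "a \<ge> 0"
  shows "((\<lambda>z. (z - gam * exp (- a * z)) * normal_density m sd z) \<longlongrightarrow> 0) at_top"
proof (cases "a = 0")
  case True
  then show ?thesis
    using assms unfolding normal_density_def by simp real_asymp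
next
  case False
  then have "a > 0"
    using assms by simp
  then show ?thesis
    using assms unfolding normal_density_def by real_asymp
qed

lemma stein_identity_adaptive_soft_upper_tail:
  assumes sd: "sd > 0" and a: "a \<ge> 0" and gam: "gam \<ge> 0" and t: "t = gam * exp (- a * t)"
  shows "(LINT z:{t<..}|lborel. normal_density m sd z * ((z - m) * adaptive_soft a gam z))
    = sd\<^sup>2 * (LINT z:{t<..}|lborel. normal_density m sd z * adaptive_soft_deriv a gam z)"
proof -
  define G where "G z = z - gam * exp (- a * z)" for z
  define G' where "G' z = 1 + gam * (a / exp (a * z))" for z
  have "t \<ge> 0"
    using gam by (subst t) simp
  then have g: "adaptive_soft a gam z = G z" and q: "adaptive_soft_deriv a gam z = G' z"
    if "z \<in> {t<..}" for z
    using that adaptive_soft_eq[OF a gam t] adaptive_soft_deriv_eq[OF a gam t]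
    by (auto simp: G_def G'_def)
  have G_int: "set_integrable lborel {t<..} (\<lambda>z. normal_density m sd z * ((z - m) * G z))"
    using set_integrable_normal_density_mult_adaptive_soft(1)[OF sd a gam, of "{t<..}" m]
    by (rule set_integrable_cong[THEN iffD1, rotated -1]) (simp_all add: g)
  have G'_int: "set_integrable lborel {t<..} (\<lambda>z. normal_density m sd z * G' z)"
    using set_integrable_normal_density_mult_adaptive_soft(2)[OF sd a gam, of "{t<..}" m]
    by (rule set_integrable_cong[THEN iffD1, rotated -1]) (simp_all add: q)
  have "isCont (\<lambda>z. G z * normal_density m sd z) t"
    using isCont_normal_density[OF sd] by (auto simp: G_def intro!: continuous_intros)
  then have lim_t: "((\<lambda>z. G z * normal_density m sd z) \<longlongrightarrow> 0) (at_right t)"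
    using t by (auto simp: G_def isCont_def intro: tendsto_within_subset[where S = UNIV])
  have t_interval: "einterval (ereal t) \<infinity> = {t<..}"
    by (auto simp: einterval_def)
  have "(LINT z:{t<..}|lborel. normal_density m sd z * ((z - m) * G z))
      = sd\<^sup>2 * (LINT z:{t<..}|lborel. normal_density m sd z * G' z)"
  proof (rule stein_identity_interval[OF sd, of "ereal t" \<infinity>, unfolded t_interval])
    fix x
    show "(G has_real_derivative G' x) (at x)"
      unfolding G_def G'_def by (auto intro!: derivative_eq_intros simp: exp_minus field_simps)
    show "isCont G' x"
      unfolding G'_def by (intro continuous_intros) simp
  qed (use G_int G'_int lim_t tendsto_mult_normal_density_at_top[OF sd a] in
      \<open>simp_all add: G_def ereal_tendsto_simps\<close>)
  moreover have "(LINT z:{t<..}|lborel. normal_density m sd z * ((z - m) * adaptive_soft a gam z))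
      = (LINT z:{t<..}|lborel. normal_density m sd z * ((z - m) * G z))"
    and "(LINT z:{t<..}|lborel. normal_density m sd z * adaptive_soft_deriv a gam z)
      = (LINT z:{t<..}|lborel. normal_density m sd z * G' z)"
    by (auto intro!: set_lebesgue_integral_cong simp: g q)
  ultimately show ?thesis
    by simp
qed

lemma normal_density_uminus: "normal_density m sd (- x) = normal_density (- m) sd x"
  by (simp add: normal_density_def power2_commute add.commute)

lemma adaptive_soft_uminus: "gam \<ge> 0 \<Longrightarrow> adaptive_soft a gam (- z) = - adaptive_soft a gam z"
  by (auto simp: adaptive_soft_def soft_threshold_def)

lemma adaptive_soft_deriv_uminus:
  "gam \<ge> 0 \<Longrightarrow> adaptive_soft_deriv a gam (- z) = adaptive_soft_deriv a gam z"
  by (simp add: adaptive_soft_deriv_def adaptive_soft_uminus)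

lemma stein_identity_adaptive_soft_lower_tail:
  assumes "sd > 0" "a \<ge> 0" "gam \<ge> 0" "t = gam * exp (- a * t)"
  shows "(LINT z:{..<-t}|lborel. normal_density m sd z * ((z - m) * adaptive_soft a gam z))
    = sd\<^sup>2 * (LINT z:{..<-t}|lborel. normal_density m sd z * adaptive_soft_deriv a gam z)"
proof -
  have reflect: "{x. - x \<in> {..<-t}} = {t<..}"
    by auto
  have "(LINT z:{..<-t}|lborel. normal_density m sd z * ((z - m) * adaptive_soft a gam z))
      = (LINT z:{t<..}|lborel. normal_density (- m) sd z * ((z - - m) * adaptive_soft a gam z))"
    using assms(3)
    by (subst set_integral_reflect, unfold reflect)
      (simp add: normal_density_uminus adaptive_soft_uminus algebra_simps)
  also have "\<dots> = sd\<^sup>2 * (LINT z:{t<..}|lborel. normal_density (- m) sd z * adaptive_soft_deriv a gam z)"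
    by (rule stein_identity_adaptive_soft_upper_tail[OF assms])
  also have "\<dots> = sd\<^sup>2 * (LINT z:{..<-t}|lborel. normal_density m sd z * adaptive_soft_deriv a gam z)"
    using assms(3)
    by (subst (2) set_integral_reflect, unfold reflect)
      (simp add: normal_density_uminus adaptive_soft_deriv_uminus)
  finally show ?thesis .
qed

lemma integral_eq_set_integral_tails:
  fixes f :: "real \<Rightarrow> real"
  assumes f: "integrable lborel f" and t: "t \<ge> 0" and f0: "\<And>z. \<bar>z\<bar> \<le> t \<Longrightarrow> f z = 0"
  shows "(\<integral>z. f z \<partial>lborel) = (LINT z:{..<-t}|lborel. f z) + (LINT z:{t<..}|lborel. f z)"
proof -
  have "f z = f z * indicator {..<-t} z + f z * indicator {t<..} z" for z
    using t f0[of z] by (auto simp: indicator_def)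
  then have "(\<integral>z. f z \<partial>lborel) = (\<integral>z. f z * indicator {..<-t} z + f z * indicator {t<..} z \<partial>lborel)"
    by presburger
  then show ?thesis
    using f by (simp add: set_lebesgue_integral_def integrable_real_mult_indicator mult.commute)
qed

lemma stein_identity_adaptive_soft:
  assumes sd: "sd > 0" and a: "a \<ge> 0" and gam: "gam \<ge> 0"
  shows "(\<integral>z. normal_density m sd z * ((z - m) * adaptive_soft a gam z) \<partial>lborel)
    = sd\<^sup>2 * (\<integral>z. normal_density m sd z * adaptive_soft_deriv a gam z \<partial>lborel)"
proof -
  obtain t where t: "t = gam * exp (- a * t)"
    using adaptive_soft_fixpoint_exists[OF a gam] .
  have t0: "t \<ge> 0"
    using gam by (subst t) simp
  have "adaptive_soft a gam z = 0" "adaptive_soft_deriv a gam z = 0" if "\<bar>z\<bar> \<le> t" for z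
    using that adaptive_soft_eq[OF a gam t] adaptive_soft_deriv_eq[OF a gam t] by auto
  then have "(\<integral>z. normal_density m sd z * ((z - m) * adaptive_soft a gam z) \<partial>lborel)
      = (LINT z:{..<-t}|lborel. normal_density m sd z * ((z - m) * adaptive_soft a gam z))
        + (LINT z:{t<..}|lborel. normal_density m sd z * ((z - m) * adaptive_soft a gam z))"
    and "(\<integral>z. normal_density m sd z * adaptive_soft_deriv a gam z \<partial>lborel)
      = (LINT z:{..<-t}|lborel. normal_density m sd z * adaptive_soft_deriv a gam z)
        + (LINT z:{t<..}|lborel. normal_density m sd z * adaptive_soft_deriv a gam z)"
    using t0 integrable_normal_density_mult_adaptive_soft[OF sd gam]
      integrable_normal_density_mult_adaptive_soft_deriv[OF sd a gam]
    by (auto intro!: integral_eq_set_integral_tails)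
  then show ?thesis
    using stein_identity_adaptive_soft_lower_tail[OF sd a gam t]
      stein_identity_adaptive_soft_upper_tail[OF sd a gam t]
    by (simp add: distrib_left)
qed

section \<open>Degrees of freedom\<close>

lemma distributed_gauss_meas_transpose_mult:
  fixes X :: "real^'p^'n" and mu :: "real^'n"
  assumes XX: "transpose X ** X = mat 1" and sd: "sd > 0"
  shows "distributed (gauss_meas mu sd) lborel (\<lambda>y. (transpose X *v y) $ j)
    (normal_density ((transpose X *v mu) $ j) sd)"
proof -
  have "(\<Sum>i\<in>UNIV. (X $ i $ j)\<^sup>2) = 1"
    using arg_cong[OF XX, of "\<lambda>A. A $ j $ j"]
    by (simp add: mat_def matrix_matrix_mult_def transpose_def power2_eq_square)
  then show ?thesis
    using distributed_gauss_meas_unit_combination[OF sd, of "\<lambda>i. X $ i $ j" mu]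
    by (simp add: matrix_vector_mult_def transpose_def)
qed

lemma dof_coordinatewise_orthonormal:
  fixes X :: "real^'p^'n" and mu :: "real^'n" and g q :: "real \<Rightarrow> real"
  assumes XX: "transpose X ** X = mat 1" and sd: "sd > 0"
    and [measurable]: "g \<in> borel_measurable borel" "q \<in> borel_measurable borel"
    and g_le: "\<And>z. \<bar>g z\<bar> \<le> \<bar>z\<bar>"
    and q_int: "\<And>m. integrable lborel (\<lambda>z. normal_density m sd z * q z)"
    and stein: "\<And>m. (\<integral>z. normal_density m sd z * ((z - m) * g z) \<partial>lborel)
      = sd\<^sup>2 * (\<integral>z. normal_density m sd z * q z \<partial>lborel)"
  shows "integrable (gauss_meas mu sd) (\<lambda>y. \<Sum>j\<in>UNIV. q ((transpose X *v y) $ j))"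
    and "(LINT y|gauss_meas mu sd. (\<Sum>j\<in>UNIV. q ((transpose X *v y) $ j)))
      = dof (gauss_meas mu sd) sd (\<lambda>y. X *v (\<chi> j. g ((transpose X *v y) $ j)))"
proof -
  let ?M = "gauss_meas mu sd"
  interpret prob_space ?M
    by (rule prob_space_gauss_meas[OF sd])
  define Z where "Z j y = (transpose X *v y) $ j" for j y
  have Z: "distributed ?M lborel (Z j) (normal_density ((transpose X *v mu) $ j) sd)" for j
    unfolding Z_def by (rule distributed_gauss_meas_transpose_mult[OF XX sd])
  have [measurable]: "Z j \<in> borel_measurable ?M" for j
    using Z by (simp add: distributed_def)
  have q_Z_int: "integrable ?M (\<lambda>y. q (Z j y))" for j
    using q_int by (subst distributed_integrable[OF Z, symmetric]) auto
  have q_Z_expectation: "expectation (\<lambda>y. q (Z j y))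
      = (\<integral>z. normal_density ((transpose X *v mu) $ j) sd z * q z \<partial>lborel)" for j
    by (subst distributed_integral[OF Z, symmetric]) auto
  have g_Z_sq: "integrable ?M (\<lambda>y. (g (Z j y))\<^sup>2)" for j
    by (rule integrable_square_comp_normal_distributed[OF sd Z _ g_le]) simp
  have "(\<Sum>i\<in>UNIV. covar ?M (\<lambda>y. y $ i) (\<lambda>y. (X *v (\<chi> j. g (Z j y))) $ i))
      = (\<Sum>j\<in>UNIV. covar ?M (\<lambda>y. (transpose X *v y) $ j) (\<lambda>y. (\<chi> j. g (Z j y)) $ j))"
    using integrable_square_normal_distributed[OF sd distributed_gauss_meas_component[OF sd]] g_Z_sq
    by (intro sum_covar_matrix_vector_mult) auto
  then have "dof ?M sd (\<lambda>y. X *v (\<chi> j. g (Z j y)))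
      = (\<Sum>j\<in>UNIV. covar ?M (Z j) (\<lambda>y. g (Z j y))) / sd\<^sup>2"
    by (simp add: dof_def Z_def[abs_def])
  also have "\<dots> = (\<Sum>j\<in>UNIV. expectation (\<lambda>y. q (Z j y)))"
    using covar_normal_distributed[OF sd Z _ g_Z_sq] sd
    by (simp add: stein q_Z_expectation sum_divide_distrib)
  also have "\<dots> = expectation (\<lambda>y. \<Sum>j\<in>UNIV. q (Z j y))"
    using q_Z_int by (simp add: Bochner_Integration.integral_sum)
  finally show "(LINT y|?M. (\<Sum>j\<in>UNIV. q ((transpose X *v y) $ j)))
      = dof ?M sd (\<lambda>y. X *v (\<chi> j. g ((transpose X *v y) $ j)))"
    by (simp add: Z_def)
  show "integrable ?M (\<lambda>y. \<Sum>j\<in>UNIV. q ((transpose X *v y) $ j))"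
    using q_Z_int by (simp add: Z_def)
qed

lemma df_hat_eq_sum_adaptive_soft_deriv:
  fixes X :: "real^'p^'n"
  assumes "\<And>j. betahat y $ j = adaptive_soft alpha gamma (beta_LS X y $ j)"
  shows "df_hat X alpha gamma betahat y = (\<Sum>j\<in>UNIV. adaptive_soft_deriv alpha gamma (beta_LS X y $ j))"
proof -
  have "active_set (betahat y) = {j. adaptive_soft alpha gamma (beta_LS X y $ j) \<noteq> 0}"
    using assms by (simp add: active_set_def)
  then show ?thesis
    by (simp add: df_hat_def adaptive_soft_deriv_def sum.If_cases Int_def sum.distrib
        sum_distrib_left)
qed

theorem corollaryS1:
  fixes X :: "real^'p^'n" and beta :: "real^'p"
    and sd alpha gamma :: real
    and betahat :: "real^'n \<Rightarrow> real^'p"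
  assumes "transpose X ** X = mat 1"
    and "sd > 0" and "alpha > 0" and "gamma > 0"
    and "\<And>y b. alasso_obj X alpha gamma y (betahat y) \<le> alasso_obj X alpha gamma y b"
  shows "integrable (gauss_meas (X *v beta) sd) (df_hat X alpha gamma betahat)
    \<and> (LINT y|gauss_meas (X *v beta) sd. df_hat X alpha gamma betahat y)
        = dof (gauss_meas (X *v beta) sd) sd (\<lambda>y. X *v betahat y)"
proof -
  note XX = assms(1) and sd = assms(2)
  have alpha: "alpha \<ge> 0" and gamma: "gamma \<ge> 0"
    using assms(3,4) by simp_all
  have betahat: "betahat y $ j = adaptive_soft alpha gamma (beta_LS X y $ j)" for y j
    by (rule alasso_minimiser_eq_adaptive_soft[OF XX gamma assms(5)])
  then have "betahat = (\<lambda>y. \<chi> j. adaptive_soft alpha gamma ((transpose X *v y) $ j))"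
    by (simp add: beta_LS_def vec_eq_iff fun_eq_iff)
  moreover have "df_hat X alpha gamma betahat
      = (\<lambda>y. \<Sum>j\<in>UNIV. adaptive_soft_deriv alpha gamma ((transpose X *v y) $ j))"
    using df_hat_eq_sum_adaptive_soft_deriv[of betahat, OF betahat] by (simp add: beta_LS_def fun_eq_iff)
  ultimately show ?thesis
    using dof_coordinatewise_orthonormal[OF XX sd borel_measurable_adaptive_soft
        borel_measurable_adaptive_soft_deriv abs_adaptive_soft_le[OF gamma]
        integrable_normal_density_mult_adaptive_soft_deriv[OF sd alpha gamma]
        stein_identity_adaptive_soft[OF sd alpha gamma]]
    by simp
qed

end
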